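(* Let $\alpha>3$, $t_0>0$, $x_0\in\mathcal H$, and let $x:[t_0,+\infty)\to\mathcal H$ be a solution of the Cauchy problem $$\tfrac{\alpha}{t}\dot x(t)+\operatorname{proj}_{C(x(t))+\ddot x(t)}(0)=0\ (t>t_0),\qquad x(t_0)=x_0,\ \dot x(t_0)=0 .$$ Assume the Assumption on the weak Pareto set in the context holds. Then $$\int_{t_0}^{+\infty}s\|\dot x(s)\|^2\,ds<+\infty,$$ i.e. $t\mapsto t\|\dot x(t)\|^2$ belongs to $L^1([t_0,+\infty))$.
   Context: $\mathcal H$ is a real Hilbert space. $f_1,\dots,f_m:\mathcal H\to\mathbb R$ are convex and continuously differentiable, and $F=(f_1,\dots,f_m)$. $C(x)=\operatorname{co}\{\nabla f_i(x):i=1,\dots,m\}$. For a closed convex $K$, $\operatorname{proj}_K(y)=\arg\min_{w\in K}\|w-y\|^2$. A solution of the Cauchy problem is a function $x:[t_0,+\infty)\to\mathcal H$ such that: $x\in C^1([t_0,+\infty))$; $\dot x$ is absolutely continuous on $[t_0,T]$ for every $T\ge t_0$; there is a Bochner measurable $\ddot x$ with $\dot x(t)=\dot x(t_0)+\int_{t_0}^t\ddot x(s)\,ds$ for all $t$, and $\frac{d}{dt}\dot x=\ddot x$ a.e.; the equation holds for almost all $t\ge t_0$; and the initial conditions hold. A point $x^*$ is weakly Pareto optimal if there is no $x$ with $f_i(x)<f_i(x^* )$ for all $i$; $P_w$ denotes the set of such points. For $\hat F\in\mathbb R^m$, $\mathcal L(\hat F)=\{x:F(x)\le\hat F\}$ and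 $P_w(\hat F)=P_w\cap\mathcal L(\hat F)$. Assumption: for all $x_0\in\mathcal H$ and all $x\in\mathcal L(F(x_0))$ there exists $x^*\in P_w(F(x))$, and $$R:=\sup_{F^*\in F(P_w(F(x_0)))}\ \inf_{x\in F^{-1}(F^* )}\tfrac12\|x-x_0\|^2<+\infty .$$ *)

theory Defs
  imports "HOL-Analysis.Analysis"
begin

definition has_gradient :: "('a::real_inner \<Rightarrow> real) \<Rightarrow> 'a \<Rightarrow> 'a \<Rightarrow> bool" where
  "has_gradient f v x \<longleftrightarrow> (f has_derivative (\<lambda>h. inner v h)) (at x)"

definition grad :: "('a::real_inner \<Rightarrow> real) \<Rightarrow> 'a \<Rightarrow> 'a" where
  "grad f x = (THE v. has_gradient f v x)"

definition proj :: "'a::real_inner set \<Rightarrow> 'a \<Rightarrow> 'a" where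
  "proj K y = (THE w. w \<in> K \<and> (\<forall>v\<in>K. (norm (w - y))\<^sup>2 \<le> (norm (v - y))\<^sup>2))"

text \<open>C(x) = co {grad f_i(x) : i = 1..m}, indices shifted to 0..m-1.\<close>
definition Cset :: "nat \<Rightarrow> (nat \<Rightarrow> 'a::real_inner \<Rightarrow> real) \<Rightarrow> 'a \<Rightarrow> 'a set" where
  "Cset m f x = convex hull {grad (f i) x | i. i < m}"

definition absolutely_continuous_on :: "real set \<Rightarrow> (real \<Rightarrow> 'a::real_normed_vector) \<Rightarrow> bool" where
  "absolutely_continuous_on S g \<longleftrightarrow>
     (\<forall>e>0. \<exists>d>0. \<forall>n::nat. \<forall>a b. (\<forall>k<n. a k \<in> S \<and> b k \<in> S \<and> a k \<le> b k)
        \<and> (\<forall>k<n. \<forall>l<n. k \<noteq> l \<longrightarrow> b k \<le> a l \<or> b l \<le> a k)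
        \<and> (\<Sum>k<n. b k - a k) < d
        \<longrightarrow> (\<Sum>k<n. norm (g (b k) - g (a k))) < e)"

definition weak_pareto :: "nat \<Rightarrow> (nat \<Rightarrow> 'a \<Rightarrow> real) \<Rightarrow> 'a set" where
  "weak_pareto m f = {xs. \<not> (\<exists>x. \<forall>i<m. f i x < f i xs)}"

definition sublevel :: "nat \<Rightarrow> (nat \<Rightarrow> 'a \<Rightarrow> real) \<Rightarrow> (nat \<Rightarrow> real) \<Rightarrow> 'a set" where
  "sublevel m f Fh = {x. \<forall>i<m. f i x \<le> Fh i}"

definition weak_pareto_level :: "nat \<Rightarrow> (nat \<Rightarrow> 'a \<Rightarrow> real) \<Rightarrow> (nat \<Rightarrow> real) \<Rightarrow> 'a set" where
  "weak_pareto_level m f Fh = weak_pareto m f \<inter> sublevel m f Fh"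

text \<open>F(x) as a vector in R^m (entries with index \<ge> m set to 0).\<close>
definition Fvec :: "nat \<Rightarrow> (nat \<Rightarrow> 'a \<Rightarrow> real) \<Rightarrow> 'a \<Rightarrow> nat \<Rightarrow> real" where
  "Fvec m f x = (\<lambda>i. if i < m then f i x else 0)"

end

theory Submission
  imports Defs
begin

(*
  Rewriting the equation as x'' = -(\<alpha>/t) x' - c(t), where c(t) maximises \<langle>x', c\<rangle> over C(x),
  shows that each 2 f\<^sub>i(x) + |x'|\<^sup>2 is nonincreasing. Hence x(T) lies in the sublevel set of x0,
  and the Pareto assumption yields a point z dominating x(T) whose distance to x0 is bounded
  independently of T. For such z, the minimum over i of

    E\<^sub>i(t) = 2 t\<^sup>2 (f\<^sub>i(x) - f\<^sub>i(z)) + 2 (\<alpha> - 3) (|x - z|\<^sup>2 + \<integral>\<^sub>t\<^sub>0\<^sup>t s |x'|\<^sup>2) + |2 (x - z) + t x'|\<^sup>2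

  is nonincreasing: at an index attaining the minimum, convexity and the maximality of c make the
  derivative nonpositive, while all terms in \<alpha> - 3 cancel. Comparing t = T with t = t0 bounds
  (\<alpha> - 3) \<integral>\<^sub>t\<^sub>0\<^sup>T s |x'|\<^sup>2 uniformly in T. Since x'' exists only almost everywhere, monotonicity
  is derived from a mean value inequality for Lipschitz functions with a negligible exceptional set.
*)

section \<open>Lipschitz functions and integrals on intervals\<close>

lemma continuous_derivative_imp_lipschitz_on:
  fixes F :: "real \<Rightarrow> 'b::real_normed_vector"
  assumes "\<And>t. t \<in> {a..b} \<Longrightarrow> (F has_vector_derivative F' t) (at t within {a..b})"
    and "continuous_on {a..b} F'"
  shows "\<exists>L. L-lipschitz_on {a..b} F"
proof -
  obtain B where B: "\<forall>t\<in>{a..b}. norm (F' t) \<le> B" "B > 0"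
    using compact_imp_bounded[OF compact_continuous_image[OF assms(2) compact_Icc]]
    by (auto simp: bounded_pos)
  have "B-lipschitz_on {a..b} F"
  proof (rule bounded_derivative_imp_lipschitz[where f'="\<lambda>t h. h *\<^sub>R F' t"])
    show "(F has_derivative (\<lambda>h. h *\<^sub>R F' t)) (at t within {a..b})" if "t \<in> {a..b}" for t
      using assms(1)[OF that] by (simp add: has_vector_derivative_def)
    show "onorm (\<lambda>h. h *\<^sub>R F' t) \<le> B" if "t \<in> {a..b}" for t
      using B(1) that onorm_scaleR_left[OF bounded_linear_ident, of "F' t"] by (simp add: onorm_id)
  qed (use B(2) in auto)
  then show ?thesis by blast
qed

lemma (in bounded_bilinear) lipschitz_on_compact:
  fixes u :: "'x::metric_space \<Rightarrow> 'a" and v :: "'x \<Rightarrow> 'b"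
  assumes S: "compact S" and u: "L1-lipschitz_on S u" and v: "L2-lipschitz_on S v"
  shows "\<exists>L. L-lipschitz_on S (\<lambda>t. prod (u t) (v t))"
proof -
  have "bounded (u ` S)" "bounded (v ` S)"
    using S u v by (auto intro!: compact_imp_bounded compact_continuous_image lipschitz_on_continuous_on)
  then obtain B1 B2 where B1: "B1 > 0" "\<And>t. t \<in> S \<Longrightarrow> norm (u t) \<le> B1"
    and B2: "B2 > 0" "\<And>t. t \<in> S \<Longrightarrow> norm (v t) \<le> B2"
    by (auto simp: bounded_pos)
  obtain K where K: "K \<ge> 0" "\<And>a b. norm (prod a b) \<le> norm a * norm b * K"
    using nonneg_bounded by blast
  have L: "L1 \<ge> 0" "L2 \<ge> 0" using u v by (auto dest: lipschitz_on_nonneg)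
  have "(K * (B1 * L2 + L1 * B2))-lipschitz_on S (\<lambda>t. prod (u t) (v t))"
  proof (rule lipschitz_onI)
    fix s t assume st: "s \<in> S" "t \<in> S"
    have "prod (u s) (v s) - prod (u t) (v t) = prod (u s) (v s - v t) + prod (u s - u t) (v t)"
      by (simp add: diff_left diff_right)
    then have "dist (prod (u s) (v s)) (prod (u t) (v t)) \<le> norm (prod (u s) (v s - v t)) + norm (prod (u s - u t) (v t))"
      by (simp add: dist_norm norm_triangle_ineq)
    also have "\<dots> \<le> norm (u s) * norm (v s - v t) * K + norm (u s - u t) * norm (v t) * K"
      using K(2) by (intro add_mono)
    also have "\<dots> \<le> B1 * (L2 * dist s t) * K + (L1 * dist s t) * B2 * K"
      using B1 B2 K(1) L lipschitz_onD[OF u st] lipschitz_onD[OF v st] st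
      by (intro add_mono mult_right_mono mult_mono) (auto simp: dist_norm)
    finally show "dist (prod (u s) (v s)) (prod (u t) (v t)) \<le> K * (B1 * L2 + L1 * B2) * dist s t"
      by (simp add: algebra_simps)
  qed (use B1 B2 K L in auto)
  then show ?thesis by blast
qed

lemma lipschitz_on_compact_norm_sq:
  fixes u :: "'x::metric_space \<Rightarrow> 'a::real_inner"
  assumes "compact S" "L-lipschitz_on S u"
  shows "\<exists>L. L-lipschitz_on S (\<lambda>t. (norm (u t))\<^sup>2)"
proof -
  obtain L' where "L'-lipschitz_on S (\<lambda>t. inner (u t) (u t))"
    using bounded_bilinear.lipschitz_on_compact[OF bounded_bilinear_inner assms assms(2)] by blast
  then show ?thesis
    unfolding power2_norm_eq_inner by blast
qed

lemma ex_lipschitz_on_add: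
  fixes f g :: "'x::metric_space \<Rightarrow> 'b::real_normed_vector"
  assumes "\<exists>L. L-lipschitz_on S f" "\<exists>L. L-lipschitz_on S g"
  shows "\<exists>L. L-lipschitz_on S (\<lambda>t. f t + g t)"
  using assms lipschitz_on_add by blast

lemma lipschitz_on_Min:
  fixes F :: "'i \<Rightarrow> 'x::metric_space \<Rightarrow> real"
  assumes "finite I" "I \<noteq> {}" "\<And>i. i \<in> I \<Longrightarrow> \<exists>L. L-lipschitz_on S (F i)"
  shows "\<exists>L. L-lipschitz_on S (\<lambda>t. Min ((\<lambda>i. F i t) ` I))"
proof -
  obtain L where "\<And>i. i \<in> I \<Longrightarrow> (L i)-lipschitz_on S (F i)"
    using assms(3) by metis
  then have M: "(Max (L ` I))-lipschitz_on S (F i)" if "i \<in> I" for i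
    using assms(1) that by (auto intro: lipschitz_on_le[of "L i"])
  have Min_le: "Min ((\<lambda>i. F i s) ` I) \<le> Min ((\<lambda>i. F i t) ` I) + Max (L ` I) * dist s t"
    if "s \<in> S" "t \<in> S" for s t
  proof -
    have "Min ((\<lambda>i. F i t) ` I) \<in> (\<lambda>i. F i t) ` I"
      using assms(1,2) by simp
    then obtain i where i: "i \<in> I" "F i t = Min ((\<lambda>i. F i t) ` I)"
      by (metis imageE)
    have "Min ((\<lambda>i. F i s) ` I) \<le> F i s" using i(1) assms(1) by auto
    also have "\<dots> \<le> F i t + Max (L ` I) * dist s t"
      using lipschitz_onD[OF M[OF i(1)] that] by (simp add: dist_real_def)
    finally show ?thesis using i(2) by simp
  qed
  have "(Max (L ` I))-lipschitz_on S (\<lambda>t. Min ((\<lambda>i. F i t) ` I))"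
  proof (rule lipschitz_onI)
    fix s t assume "s \<in> S" "t \<in> S"
    then show "dist (Min ((\<lambda>i. F i s) ` I)) (Min ((\<lambda>i. F i t) ` I)) \<le> Max (L ` I) * dist s t"
      using Min_le[of s t] Min_le[of t s] by (simp add: dist_real_def dist_commute abs_le_iff)
  qed (use M assms(2) lipschitz_on_nonneg in blast)
  then show ?thesis by blast
qed

lemma has_integral_bounded_imp_lipschitz_on:
  fixes v h :: "real \<Rightarrow> 'a::real_inner"
  assumes integral: "\<And>t. t \<in> {a..b} \<Longrightarrow> (h has_integral (v t - v a)) {a..t}"
    and N: "negligible N" and bound: "\<And>t. t \<in> {a..b} - N \<Longrightarrow> norm (h t) \<le> B" and "0 \<le> B"
  shows "B-lipschitz_on {a..b} v"
proof (rule lipschitz_on_leI)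
  fix s t assume st: "s \<in> {a..b}" "t \<in> {a..b}" "s \<le> t"
  define d where "d = v t - v s"
  \<comment> \<open>Restricting integrals to subintervals needs completeness, so pass to real integrands.\<close>
  define r where "r = (\<lambda>u. if u \<in> N then 0 else inner d (h u))"
  have r: "(r has_integral inner d (v u - v a)) {a..u}" if "u \<in> {a..b}" for u
    using has_integral_spike[OF N _ has_integral_linear[OF integral[OF that] bounded_linear_inner_right]]
    by (simp add: r_def o_def)
  have r_st: "(r has_integral inner d d) {s..t}"
  proof -
    have "r integrable_on {s..t}"
      using integrable_subinterval_real[OF has_integral_integrable[OF r[OF st(2)]], of s t] st by auto
    moreover have "integral {a..s} r + integral {s..t} r = integral {a..t} r"
      using st by (intro Henstock_Kurzweil_Integration.integral_combine has_integral_integrable[OF r[OF st(2)]]) auto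
    moreover have "integral {a..u} r = inner d (v u - v a)" if "u \<in> {a..b}" for u
      using r[OF that] by (rule integral_unique)
    ultimately show ?thesis
      using st by (simp add: has_integral_iff d_def inner_diff_right)
  qed
  have r_bound: "norm (r u) \<le> norm d * B" if "u \<in> {s..t} - {}" for u
  proof (cases "u \<in> N")
    case False
    then have "norm (r u) \<le> norm d * norm (h u)"
      using Cauchy_Schwarz_ineq2[of d "h u"] by (simp add: r_def)
    also have "\<dots> \<le> norm d * B"
      using bound[of u] False that st by (intro mult_left_mono) auto
    finally show ?thesis .
  qed (use \<open>0 \<le> B\<close> in \<open>simp add: r_def\<close>)
  have "norm (inner d d) \<le> norm d * B * (t - s)"
    using has_integral_bound_real[OF _ finite.emptyI r_st r_bound] st \<open>0 \<le> B\<close> by simp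
  then have "norm d * norm d \<le> norm d * (B * (t - s))"
    using st by (simp add: power2_norm_eq_inner[symmetric] power2_eq_square algebra_simps)
  then have "norm d \<le> B * (t - s)"
    by (cases "norm d = 0") (use st \<open>0 \<le> B\<close> in auto)
  then show "dist (v s) (v t) \<le> B * dist s t"
    using st by (simp add: d_def dist_norm dist_real_def norm_minus_commute)
qed fact

lemma lipschitz_on_negligible_image:
  fixes f :: "'M::euclidean_space \<Rightarrow> 'N::euclidean_space"
  assumes "DIM('M) \<le> DIM('N)" "L-lipschitz_on S f" "negligible T" "T \<subseteq> S"
  shows "negligible (f ` T)"
proof (rule negligible_locally_Lipschitz_image[OF assms(1,3)])
  fix x assume "x \<in> T"
  then show "\<exists>U B. open U \<and> x \<in> U \<and> (\<forall>y\<in>T \<inter> U. norm (f y - f x) \<le> B * norm (y - x))"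
    using assms(4) lipschitz_on_normD[OF assms(2)] by (intro exI[of _ UNIV] exI[of _ L]) auto
qed

lemma nn_integral_Icc_continuous:
  fixes h :: "real \<Rightarrow> real"
  assumes "continuous_on {a..b} h" "\<And>s. s \<in> {a..b} \<Longrightarrow> 0 \<le> h s"
  shows "(\<integral>\<^sup>+ s. ennreal (h s) * indicator {a..b} s \<partial>lborel) = ennreal (integral {a..b} h)"
proof -
  have "(h has_integral integral {a..b} h) {a..b}"
    using assms(1) by (intro integrable_integral integrable_continuous_interval)
  from nn_integral_has_integral_lebesgue[OF _ this] assms(2)
  have "(\<integral>\<^sup>+ s. ennreal (h s * indicator {a..b} s) \<partial>lborel) = ennreal (integral {a..b} h)"
    by (simp add: mult.commute)
  moreover have "(\<lambda>s. ennreal (h s * indicator {a..b} s)) = (\<lambda>s. ennreal (h s) * indicator {a..b} s)"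
    by (auto simp: indicator_def)
  ultimately show ?thesis
    by simp
qed

lemma nn_integral_atLeast_le:
  fixes h :: "real \<Rightarrow> real"
  assumes cont: "continuous_on {a..} h" and nonneg: "\<And>s. a \<le> s \<Longrightarrow> 0 \<le> h s"
    and bound: "\<And>T. a \<le> T \<Longrightarrow> integral {a..T} h \<le> B"
  shows "(\<integral>\<^sup>+ s \<in> {a..}. ennreal (h s) \<partial>lborel) \<le> ennreal B"
proof -
  define H where "H n s = ennreal (h s) * indicator {a..a + real n} s" for n s
  have "incseq H"
    by (auto simp: H_def incseq_def le_fun_def indicator_def)
  moreover have "H n \<in> borel_measurable lborel" for n
  proof -
    have "(\<lambda>s. indicator {a..a + real n} s *\<^sub>R h s) \<in> borel_measurable borel"
      by (intro borel_measurable_continuous_on_indicator continuous_on_subset[OF cont]) auto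
    then have "(\<lambda>s. ennreal (indicator {a..a + real n} s *\<^sub>R h s)) \<in> borel_measurable borel"
      by measurable
    moreover have "(\<lambda>s. ennreal (indicator {a..a + real n} s *\<^sub>R h s)) = H n"
      by (auto simp: H_def indicator_def)
    ultimately show ?thesis
      by simp
  qed
  ultimately have "(\<integral>\<^sup>+ s. (SUP n. H n s) \<partial>lborel) = (SUP n. integral\<^sup>N lborel (H n))"
    by (rule nn_integral_monotone_convergence_SUP)
  moreover have "(SUP n. H n s) = ennreal (h s) * indicator {a..} s" for s
  proof (cases "a \<le> s")
    case True
    then obtain n :: nat where "s \<le> a + real n"
      using real_arch_simple[of "s - a"] by (auto simp: algebra_simps)
    then show ?thesis
      using True by (intro antisym SUP_least SUP_upper2[of n]) (auto simp: H_def indicator_def)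
  qed (simp add: H_def indicator_def)
  moreover have "integral\<^sup>N lborel (H n) \<le> ennreal B" for n
  proof -
    have "integral\<^sup>N lborel (H n) = ennreal (integral {a..a + real n} h)"
      unfolding H_def using nonneg by (intro nn_integral_Icc_continuous continuous_on_subset[OF cont]) auto
    then show ?thesis
      using bound[of "a + real n"] by (simp add: ennreal_leI)
  qed
  ultimately show ?thesis
    by (simp add: SUP_least)
qed

section \<open>Monotonicity off a null set\<close>

lemma touched_above_imp_right_slope_le:
  fixes F E :: "real \<Rightarrow> real"
  assumes "(E has_real_derivative d) (at s)" "d \<le> 0" "E s = F s"
    and "\<And>t. t \<in> {s..b} \<Longrightarrow> F t \<le> E t" "s < b" "e > 0"
  shows "\<exists>\<delta>>0. \<forall>h. 0 < h \<and> h < \<delta> \<longrightarrow> F (s + h) \<le> F s + e * h"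
proof -
  have "((\<lambda>t. E t - e * t) has_real_derivative (d - e)) (at s)"
    using assms(1) by (auto intro!: derivative_eq_intros)
  from DERIV_neg_dec_right[OF this] assms(2,6) obtain \<delta> where "\<delta> > 0"
    and \<delta>: "\<And>h. 0 < h \<Longrightarrow> h < \<delta> \<Longrightarrow> E (s + h) - e * (s + h) < E s - e * s" by auto
  have "F (s + h) \<le> F s + e * h" if "0 < h" "h < min \<delta> (b - s)" for h
  proof -
    have "F (s + h) \<le> E (s + h)"
      using assms(4)[of "s + h"] that by auto
    also have "\<dots> \<le> F s + e * h"
      using \<delta>[of h] that assms(3) by (auto simp: algebra_simps)
    finally show ?thesis .
  qed
  then show ?thesis
    using \<open>\<delta> > 0\<close> \<open>s < b\<close> by (intro exI[of _ "min \<delta> (b - s)"]) auto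
qed

lemma upcrossing_in_exceptional_set:
  fixes G :: "real \<Rightarrow> real"
  assumes "a \<le> b" and cont: "continuous_on {a..b} G" and y: "G a < y" "y < G b"
    and decreasing: "\<And>s. s \<in> {a<..<b} - N \<Longrightarrow> \<exists>\<delta>>0. \<forall>h. 0 < h \<and> h < \<delta> \<longrightarrow> G (s + h) < G s"
  shows "y \<in> G ` (N \<inter> {a<..<b})"
proof -
  \<comment> \<open>At the last point \<open>s\<close> with \<open>G s \<le> y\<close> we have \<open>G s = y\<close>, and \<open>G\<close> does not decrease right after \<open>s\<close>.\<close>
  define S where "S = {a..b} \<inter> G -` {..y}"
  define s where "s = Sup S"
  have "closed S"
    unfolding S_def using cont by (rule continuous_closed_preimage) auto
  moreover have "a \<in> S" "bdd_above S"
    using y \<open>a \<le> b\<close> by (auto simp: S_def bdd_above_def)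
  ultimately have "s \<in> S"
    unfolding s_def by (blast intro: closed_contains_Sup)
  then have s: "a \<le> s" "s \<le> b" "G s \<le> y"
    by (auto simp: S_def)
  have above: "y < G t" if "t \<in> {a..b}" "s < t" for t
    using cSup_upper[OF _ \<open>bdd_above S\<close>, of t] that by (force simp: S_def s_def)
  have "G s = y"
  proof (rule ccontr)
    assume "G s \<noteq> y"
    with s have "G s < y" by simp
    moreover have "continuous_on {s..b} G"
      using s by (intro continuous_on_subset[OF cont]) auto
    ultimately obtain t where "s \<le> t" "t \<le> b" "G t = y"
      using IVT'[of G s y b] y s by auto
    then show False
      using above[of t] s \<open>G s < y\<close> by (cases "t = s") auto
  qed
  then have "s \<in> {a<..<b}"
    using s y by (auto simp: le_less)
  moreover have "s \<in> N"
  proof (rule ccontr)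
    assume "s \<notin> N"
    then obtain \<delta> where "\<delta> > 0" "\<And>h. 0 < h \<Longrightarrow> h < \<delta> \<Longrightarrow> G (s + h) < G s"
      using decreasing \<open>s \<in> {a<..<b}\<close> by blast
    moreover define h where "h = min \<delta> (b - s) / 2"
    moreover have "0 < h" "h < \<delta>" "s + h \<in> {a..b}"
      using \<open>\<delta> > 0\<close> \<open>s \<in> {a<..<b}\<close> by (auto simp: h_def min_def field_simps)
    ultimately show False
      using \<open>G s = y\<close> above[of "s + h"] by fastforce
  qed
  ultimately show ?thesis
    using \<open>G s = y\<close> by blast
qed

lemma lipschitz_nonincreasing_if_touched_above:
  fixes F :: "real \<Rightarrow> real"
  assumes "a \<le> b" and lip: "L-lipschitz_on {a..b} F" and "negligible N"
    and touch: "\<And>s. s \<in> {a<..<b} - N \<Longrightarrow> \<exists>E d. (E has_real_derivative d) (at s) \<and> d \<le> 0 \<and>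
                  E s = F s \<and> (\<forall>t\<in>{a..b}. F t \<le> E t)"
  shows "F b \<le> F a"
proof (rule ccontr)
  assume "\<not> F b \<le> F a"
  then have "F a < F b" "a < b"
    using \<open>a \<le> b\<close> by (auto simp: le_less)
  \<comment> \<open>Tilting \<open>F\<close> by half its mean slope keeps it increasing overall but makes it strictly
    decreasing to the right of every point outside \<open>N\<close>.\<close>
  define e where "e = (F b - F a) / (2 * (b - a))"
  define G where "G t = F t - e * (t - a)" for t
  have "e > 0"
    using \<open>F a < F b\<close> \<open>a < b\<close> by (simp add: e_def)
  have lipG: "(L + \<bar>e\<bar> * (1 + 0))-lipschitz_on {a..b} G"
    unfolding G_def by (intro lipschitz_on_diff lip lipschitz_on_cmult_real lipschitz_on_id lipschitz_on_constant)
  have "{G a<..<G b} \<subseteq> G ` (N \<inter> {a<..<b})"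
  proof
    fix y assume "y \<in> {G a<..<G b}"
    show "y \<in> G ` (N \<inter> {a<..<b})"
    proof (rule upcrossing_in_exceptional_set[OF \<open>a \<le> b\<close> lipschitz_on_continuous_on[OF lipG]])
      show "G a < y" "y < G b"
        using \<open>y \<in> {G a<..<G b}\<close> by auto
      fix s assume s: "s \<in> {a<..<b} - N"
      obtain E d where "(E has_real_derivative d) (at s)" "d \<le> 0" "E s = F s" "\<forall>t\<in>{a..b}. F t \<le> E t"
        using touch[OF s] by blast
      then obtain \<delta> where "\<delta> > 0" and \<delta>: "\<And>h. 0 < h \<and> h < \<delta> \<Longrightarrow> F (s + h) \<le> F s + e / 2 * h"
        using touched_above_imp_right_slope_le[of E d s F b "e / 2"] s \<open>e > 0\<close> by auto
      show "\<exists>\<delta>>0. \<forall>h. 0 < h \<and> h < \<delta> \<longrightarrow> G (s + h) < G s"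
      proof (intro exI[of _ \<delta>] conjI allI impI)
        fix h assume h: "0 < h \<and> h < \<delta>"
        then show "G (s + h) < G s"
          using \<delta>[OF h] mult_pos_pos[OF \<open>e > 0\<close>, of h] by (simp add: G_def algebra_simps)
      qed fact
    qed
  qed
  moreover have "negligible (G ` (N \<inter> {a<..<b}))"
    using \<open>negligible N\<close> by (intro lipschitz_on_negligible_image[OF _ lipG]) (auto intro: negligible_subset)
  moreover have "G b = (F a + F b) / 2"
    using \<open>a < b\<close> by (simp add: G_def e_def field_simps)
  then have "G a < G b"
    using \<open>F a < F b\<close> by (simp add: G_def)
  ultimately show False
    using open_not_negligible[of "{G a<..<G b}"] negligible_subset by auto
qed

lemma AE_lebesgue_obtain_negligible:
  assumes "AE t in lebesgue. P t"
  obtains N where "negligible N" "\<And>t. t \<notin> N \<Longrightarrow> P t"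
proof -
  from AE_E[OF assms] obtain N
    where N: "{t \<in> space lebesgue. \<not> P t} \<subseteq> N" "emeasure lebesgue N = 0" "N \<in> sets lebesgue" .
  have "negligible N"
    unfolding negligible_iff_null_sets using N(2,3) by (rule null_setsI)
  moreover have "P t" if "t \<notin> N" for t
    using N(1) that by auto
  ultimately show ?thesis
    by (rule that)
qed

section \<open>Derivatives, gradients and the projection\<close>

lemma has_real_derivative_norm_sq:
  fixes u :: "real \<Rightarrow> 'a::real_inner"
  assumes "(u has_vector_derivative u') (at t within S)"
  shows "((\<lambda>t. (norm (u t))\<^sup>2) has_real_derivative 2 * inner (u t) u') (at t within S)"
proof -
  have "((\<lambda>t. inner (u t) (u t)) has_derivative (\<lambda>h. inner (u t) (h *\<^sub>R u') + inner (h *\<^sub>R u') (u t))) (at t within S)"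
    using assms unfolding has_vector_derivative_def by (intro has_derivative_inner)
  moreover have "(\<lambda>h. inner (u t) (h *\<^sub>R u') + inner (h *\<^sub>R u') (u t)) = (*) (2 * inner (u t) u')"
    by (auto simp: fun_eq_iff inner_commute)
  ultimately show ?thesis
    unfolding has_field_derivative_def power2_norm_eq_inner by simp
qed

lemma has_gradient_imp_grad_eq:
  assumes "has_gradient f v x"
  shows "grad f x = v"
  unfolding grad_def
proof (rule the_equality)
  show "has_gradient f v x" by fact
  fix w assume "has_gradient f w x"
  then have "(\<lambda>h. inner w h) = (\<lambda>h. inner v h)"
    using assms unfolding has_gradient_def by (rule has_derivative_unique)
  then have "inner (w - v) (w - v) = 0"
    by (metis inner_diff_left right_minus_eq)
  then show "w = v" by simp
qed

lemma has_gradient_chain: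
  assumes "has_gradient f G (u t)" "(u has_vector_derivative v) (at t within S)"
  shows "((\<lambda>s. f (u s)) has_real_derivative inner G v) (at t within S)"
proof -
  have "(f has_derivative (\<lambda>h. inner G h)) (at (u t) within u ` S)"
    using assms(1) unfolding has_gradient_def by (rule has_derivative_at_withinI)
  from diff_chain_within[OF assms(2)[unfolded has_vector_derivative_def] this]
  have "((\<lambda>s. f (u s)) has_derivative (\<lambda>h. inner G (h *\<^sub>R v))) (at t within S)"
    by (simp add: o_def)
  moreover have "(\<lambda>h. inner G (h *\<^sub>R v)) = (*) (inner G v)"
    by (auto simp: fun_eq_iff)
  ultimately show ?thesis
    by (simp add: has_field_derivative_def)
qed

lemma convex_on_gradient_le:
  fixes f :: "'a::real_inner \<Rightarrow> real"
  assumes cvx: "convex_on UNIV f" and g: "has_gradient f v x"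
  shows "inner v (z - x) \<le> f z - f x"
proof -
  define \<phi> where "\<phi> s = f (x + s *\<^sub>R (z - x))" for s :: real
  have "convex_on UNIV \<phi>"
  proof (rule convex_onI)
    fix u s t :: real assume u: "0 < u" "u < 1"
    have "x + ((1 - u) *\<^sub>R s + u *\<^sub>R t) *\<^sub>R (z - x)
        = (1 - u) *\<^sub>R (x + s *\<^sub>R (z - x)) + u *\<^sub>R (x + t *\<^sub>R (z - x))"
      by (simp add: algebra_simps)
    then show "\<phi> ((1 - u) *\<^sub>R s + u *\<^sub>R t) \<le> (1 - u) * \<phi> s + u * \<phi> t"
      using convex_onD[OF cvx, of u "x + s *\<^sub>R (z - x)" "x + t *\<^sub>R (z - x)"] u by (simp add: \<phi>_def)
  qed auto
  moreover have "(\<phi> has_field_derivative inner v (z - x)) (at 0)"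
  proof -
    have line: "((\<lambda>s. x + s *\<^sub>R (z - x)) has_derivative (\<lambda>s. s *\<^sub>R (z - x))) (at 0)"
      by (auto intro!: derivative_eq_intros)
    have "(f has_derivative (\<lambda>h. inner v h)) (at (x + 0 *\<^sub>R (z - x)))"
      using g by (simp add: has_gradient_def)
    from diff_chain_at[OF line this]
    have "(\<phi> has_derivative (\<lambda>s. inner v (s *\<^sub>R (z - x)))) (at 0)"
      unfolding \<phi>_def by (simp add: o_def)
    moreover have "(\<lambda>s. inner v (s *\<^sub>R (z - x))) = (*) (inner v (z - x))"
      by (auto simp: fun_eq_iff)
    ultimately show ?thesis
      by (simp add: has_field_derivative_def)
  qed
  ultimately have "\<phi> 1 - \<phi> 0 \<ge> inner v (z - x) * (1 - 0)"
    by (intro convex_on_imp_above_tangent[where A=UNIV]) auto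
  then show ?thesis
    by (simp add: \<phi>_def)
qed

lemma proj_compact_convex:
  fixes K :: "'a::real_inner set"
  assumes "compact K" "convex K" "K \<noteq> {}"
  shows "proj K y \<in> K" "\<And>v. v \<in> K \<Longrightarrow> inner (y - proj K y) (v - proj K y) \<le> 0"
proof -
  have "continuous_on K (\<lambda>w. dist y w)"
    by (intro continuous_intros)
  then obtain w where w: "w \<in> K" "\<forall>v\<in>K. dist y w \<le> dist y v"
    using continuous_attains_inf[OF assms(1,3)] by blast
  have "closed K"
    using assms(1) by (rule compact_imp_closed)
  have "proj K y = w"
    unfolding proj_def
  proof (rule the_equality)
    show "w \<in> K \<and> (\<forall>v\<in>K. (norm (w - y))\<^sup>2 \<le> (norm (v - y))\<^sup>2)"
      using w by (auto simp: dist_norm norm_minus_commute intro!: power_mono)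
    fix w' assume w': "w' \<in> K \<and> (\<forall>v\<in>K. (norm (w' - y))\<^sup>2 \<le> (norm (v - y))\<^sup>2)"
    then have "\<forall>v\<in>K. dist y w' \<le> dist y v"
      by (auto simp: dist_norm norm_minus_commute intro: power2_le_imp_le)
    then show "w' = w"
      using any_closest_point_unique[OF assms(2) \<open>closed K\<close>, of w' w y] w w' by auto
  qed
  then show "proj K y \<in> K"
    using w by simp
  show "inner (y - proj K y) (v - proj K y) \<le> 0" if "v \<in> K" for v
    using any_closest_point_dot[OF assms(2) \<open>closed K\<close> w(1) that w(2)] \<open>proj K y = w\<close> by simp
qed

lemma Cset_compact_convex:
  assumes "0 < m"
  shows "compact (Cset m f y)" "convex (Cset m f y)" "Cset m f y \<noteq> {}"
proof -
  have "{grad (f i) y | i. i < m} = (\<lambda>i. grad (f i) y) ` {..<m}"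
    by auto
  then show "compact (Cset m f y)"
    unfolding Cset_def by (metis finite_imp_compact_convex_hull finite_imageI finite_lessThan)
  show "convex (Cset m f y)"
    unfolding Cset_def by simp
  show "Cset m f y \<noteq> {}"
    using assms by (auto simp: Cset_def)
qed

lemma grad_in_Cset: "i < m \<Longrightarrow> grad (f i) y \<in> Cset m f y"
  unfolding Cset_def by (rule hull_inc) auto

lemma Cset_inner_ge:
  assumes "c \<in> Cset m f y" "\<And>i. i < m \<Longrightarrow> M \<le> inner (grad (f i) y) w"
  shows "M \<le> inner c w"
proof -
  have "Cset m f y \<subseteq> {c. inner w c \<ge> M}"
    unfolding Cset_def
  proof (rule hull_minimal)
    show "{grad (f i) y | i. i < m} \<subseteq> {c. inner w c \<ge> M}"
      using assms(2) by (auto simp: inner_commute)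
  qed (rule convex_halfspace_ge)
  then show ?thesis
    using assms(1) by (auto simp: inner_commute)
qed

lemma Cset_norm_le:
  assumes "c \<in> Cset m f y" "\<And>i. i < m \<Longrightarrow> norm (grad (f i) y) \<le> B"
  shows "norm c \<le> B"
proof -
  have "Cset m f y \<subseteq> cball 0 B"
    unfolding Cset_def using assms(2) by (intro hull_minimal) auto
  then show ?thesis
    using assms(1) by auto
qed

lemma proj_equation_imp_maximiser:
  fixes C :: "'a::real_inner set"
  assumes C: "compact C" "convex C" "C \<noteq> {}" and "r > 0"
    and eq: "r *\<^sub>R v + proj ((\<lambda>c. c + a) ` C) 0 = 0"
  shows "- r *\<^sub>R v - a \<in> C" "\<And>c. c \<in> C \<Longrightarrow> inner v c \<le> inner v (- r *\<^sub>R v - a)"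
proof -
  define K where "K = (\<lambda>c. c + a) ` C"
  have "K = (+) a ` C"
    unfolding K_def by (auto simp: add.commute)
  then have K: "compact K" "convex K" "K \<noteq> {}"
    using C by (auto intro: compact_translation convex_translation)
  have p: "proj K 0 = - r *\<^sub>R v"
    using eq unfolding K_def by (simp add: eq_neg_iff_add_eq_0 add.commute)
  then show "- r *\<^sub>R v - a \<in> C"
    using proj_compact_convex(1)[OF K, of 0] by (auto simp: K_def)
  fix c assume "c \<in> C"
  then have "inner (r *\<^sub>R v) (c + a + r *\<^sub>R v) \<le> 0"
    using proj_compact_convex(2)[OF K, of "c + a" 0] p by (simp add: K_def)
  then have "r * inner v (c - (- r *\<^sub>R v - a)) \<le> 0"
    by (simp add: algebra_simps)
  then show "inner v c \<le> inner v (- r *\<^sub>R v - a)"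
    using \<open>r > 0\<close> by (simp add: mult_le_0_iff inner_diff_right)
qed

lemma weak_pareto_dominating_point_bounded:
  fixes f :: "nat \<Rightarrow> 'a::real_normed_vector \<Rightarrow> real"
  assumes pareto_exists: "\<forall>y0 y. y \<in> sublevel m f (Fvec m f y0) \<longrightarrow>
                          (\<exists>xs. xs \<in> weak_pareto_level m f (Fvec m f y))"
    and R_finite: "(SUP Fs \<in> Fvec m f ` weak_pareto_level m f (Fvec m f x0).
                      INF z \<in> {z. Fvec m f z = Fs}. ereal ((norm (z - x0))\<^sup>2 / 2)) < \<infinity>"
  obtains \<rho> where "\<And>y. \<forall>i<m. f i y \<le> f i x0 \<Longrightarrow> \<exists>z. (\<forall>i<m. f i z \<le> f i y) \<and> norm (z - x0) \<le> \<rho>"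
proof -
  obtain n :: nat where n: "(SUP Fs \<in> Fvec m f ` weak_pareto_level m f (Fvec m f x0).
                      INF z \<in> {z. Fvec m f z = Fs}. ereal ((norm (z - x0))\<^sup>2 / 2)) < real n"
    using R_finite by (auto simp: less_PInf_Ex_of_nat)
  have "\<exists>z. (\<forall>i<m. f i z \<le> f i y) \<and> norm (z - x0) \<le> sqrt (2 * real n)"
    if y: "\<forall>i<m. f i y \<le> f i x0" for y
  proof -
    have "y \<in> sublevel m f (Fvec m f x0)"
      using y by (simp add: sublevel_def Fvec_def)
    then obtain xs where xs: "xs \<in> weak_pareto_level m f (Fvec m f y)"
      using pareto_exists by blast
    then have xs_y: "\<forall>i<m. f i xs \<le> f i y"
      by (simp add: weak_pareto_level_def sublevel_def Fvec_def)
    then have "xs \<in> weak_pareto_level m f (Fvec m f x0)"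
      using xs y by (auto simp: weak_pareto_level_def sublevel_def Fvec_def intro: order_trans)
    then have "(INF z \<in> {z. Fvec m f z = Fvec m f xs}. ereal ((norm (z - x0))\<^sup>2 / 2)) < real n"
      using le_less_trans[OF SUP_upper[OF imageI] n] by blast
    then obtain z where z: "Fvec m f z = Fvec m f xs" "(norm (z - x0))\<^sup>2 / 2 < real n"
      by (auto simp: INF_less_iff)
    have "f i z = f i xs" if "i < m" for i
      using fun_cong[OF z(1), of i] that by (simp add: Fvec_def)
    then have "\<forall>i<m. f i z \<le> f i y"
      using xs_y by simp
    moreover have "norm (z - x0) \<le> sqrt (2 * real n)"
      using z(2) by (intro real_le_rsqrt) simp
    ultimately show ?thesis
      by blast
  qed
  then show ?thesis
    using that by blast
qed

section \<open>The trajectory\<close>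

locale inertial_pareto_flow =
  fixes f :: "nat \<Rightarrow> 'a::real_inner \<Rightarrow> real" and m :: nat and \<alpha> t0 :: real
    and x x' x'' :: "real \<Rightarrow> 'a" and N :: "real set"
  assumes m_pos: "0 < m"
    and convex: "\<And>i. i < m \<Longrightarrow> convex_on UNIV (f i)"
    and gradient: "\<And>i y. i < m \<Longrightarrow> has_gradient (f i) (grad (f i) y) y"
    and grad_cont: "\<And>i. i < m \<Longrightarrow> continuous_on UNIV (grad (f i))"
    and alpha: "3 < \<alpha>" and t0: "0 < t0"
    and x_deriv: "\<And>t. t0 \<le> t \<Longrightarrow> (x has_vector_derivative x' t) (at t within {t0..})"
    and x'_cont: "continuous_on {t0..} x'"
    and x'_init: "x' t0 = 0"
    and x''_int: "\<And>t. t0 \<le> t \<Longrightarrow> (x'' has_integral (x' t - x' t0)) {t0..t}"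
    and N: "negligible N"
    and x''_deriv: "\<And>t. t0 < t \<Longrightarrow> t \<notin> N \<Longrightarrow> (x' has_vector_derivative x'' t) (at t)"
    and equation: "\<And>t. t0 < t \<Longrightarrow> t \<notin> N \<Longrightarrow>
                     (\<alpha> / t) *\<^sub>R x' t + proj ((\<lambda>v. v + x'' t) ` Cset m f (x t)) 0 = 0"
begin

lemma x_has_vector_derivative_at: "t0 < t \<Longrightarrow> (x has_vector_derivative x' t) (at t)"
  using x_deriv[of t] at_within_interior[of t "{t0..}"] by simp

lemma x_has_vector_derivative_within: "t0 \<le> t \<Longrightarrow> S \<subseteq> {t0..} \<Longrightarrow> (x has_vector_derivative x' t) (at t within S)"
  using x_deriv by (rule has_vector_derivative_within_subset)

lemma continuous_on_x: "continuous_on {t0..} x"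
  using x_deriv by (intro continuous_on_vector_derivative) auto

lemma continuous_on_grad_x: "i < m \<Longrightarrow> continuous_on {t0..} (\<lambda>t. grad (f i) (x t))"
  using continuous_on_compose2[OF grad_cont continuous_on_x] by auto

lemma f_x_has_derivative:
  "i < m \<Longrightarrow> (x has_vector_derivative x' t) (at t within S) \<Longrightarrow>
    ((\<lambda>t. f i (x t)) has_real_derivative inner (grad (f i) (x t)) (x' t)) (at t within S)"
  using gradient by (rule has_gradient_chain)

lemma continuous_on_f_x:
  assumes "i < m"
  shows "continuous_on {t0..} (\<lambda>t. f i (x t))"
proof -
  have "isCont (f i) y" for y
    using gradient[OF assms, of y] unfolding has_gradient_def by (rule has_derivative_continuous)
  then show ?thesis
    by (intro continuous_on_compose2[OF _ continuous_on_x, of UNIV] continuous_at_imp_continuous_on) auto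
qed

lemma continuous_on_kinetic: "continuous_on {t0..} (\<lambda>s. s * (norm (x' s))\<^sup>2)"
  by (intro continuous_intros x'_cont)

lemma gradient_inequality: "i < m \<Longrightarrow> inner (grad (f i) y) (z - y) \<le> f i z - f i y"
  using convex gradient by (rule convex_on_gradient_le)

lemma selection:
  assumes "t0 < t" "t \<notin> N"
  obtains c where "c \<in> Cset m f (x t)" "x'' t = - (\<alpha> / t) *\<^sub>R x' t - c"
    "\<And>c'. c' \<in> Cset m f (x t) \<Longrightarrow> inner (x' t) c' \<le> inner (x' t) c"
proof -
  have "\<alpha> / t > 0"
    using assms t0 alpha by simp
  note maximiser = proj_equation_imp_maximiser[OF Cset_compact_convex[OF m_pos] this equation[OF assms]]
  show ?thesis
  proof (rule that)
    show "- (\<alpha> / t) *\<^sub>R x' t - x'' t \<in> Cset m f (x t)"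
      by (rule maximiser(1))
    show "inner (x' t) c' \<le> inner (x' t) (- (\<alpha> / t) *\<^sub>R x' t - x'' t)" if "c' \<in> Cset m f (x t)" for c'
      using that by (rule maximiser(2))
  qed simp
qed

lemma lipschitz_x: "\<exists>L. L-lipschitz_on {t0..T} x"
proof (rule continuous_derivative_imp_lipschitz_on)
  show "(x has_vector_derivative x' t) (at t within {t0..T})" if "t \<in> {t0..T}" for t
    using that by (intro x_has_vector_derivative_within) auto
  show "continuous_on {t0..T} x'"
    by (rule continuous_on_subset[OF x'_cont]) auto
qed

lemma lipschitz_x':
  assumes "t0 \<le> T"
  shows "\<exists>L. L-lipschitz_on {t0..T} x'"
proof -
  have "bounded (x' ` {t0..T})"
    by (intro compact_imp_bounded compact_continuous_image continuous_on_subset[OF x'_cont]) auto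
  then obtain Bv where Bv: "\<forall>t\<in>{t0..T}. norm (x' t) \<le> Bv"
    by (auto simp: bounded_iff)
  have "bounded ((\<lambda>t. \<Sum>i<m. norm (grad (f i) (x t))) ` {t0..T})"
    by (intro compact_imp_bounded compact_continuous_image continuous_on_sum continuous_on_norm
        continuous_on_subset[OF continuous_on_grad_x]) auto
  then obtain Bg where Bg: "\<forall>t\<in>{t0..T}. \<bar>\<Sum>i<m. norm (grad (f i) (x t))\<bar> \<le> Bg"
    by (auto simp: bounded_iff)
  define B where "B = \<alpha> / t0 * \<bar>Bv\<bar> + \<bar>Bg\<bar>"
  have "norm (x'' t) \<le> B" if "t \<in> {t0..T} - (N \<union> {t0})" for t
  proof -
    from that have t: "t0 < t" "t \<notin> N" "t \<le> T"
      by auto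
    obtain c where c: "c \<in> Cset m f (x t)" "x'' t = - (\<alpha> / t) *\<^sub>R x' t - c"
      using selection[OF t(1,2)] by blast
    have "norm (grad (f i) (x t)) \<le> \<bar>Bg\<bar>" if "i < m" for i
    proof -
      have "norm (grad (f i) (x t)) \<le> (\<Sum>i<m. norm (grad (f i) (x t)))"
        using that by (intro member_le_sum) auto
      also have "\<dots> \<le> \<bar>Bg\<bar>"
        using Bg[rule_format, of t] t by (simp add: abs_le_iff)
      finally show ?thesis .
    qed
    then have "norm c \<le> \<bar>Bg\<bar>"
      using Cset_norm_le[OF c(1)] by blast
    moreover have "\<alpha> / t * norm (x' t) \<le> \<alpha> / t0 * \<bar>Bv\<bar>"
      using Bv[rule_format, of t] t t0 alpha by (intro mult_mono frac_le) auto
    ultimately show ?thesis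
      using t t0 alpha c(2) norm_triangle_ineq4[of "- (\<alpha> / t) *\<^sub>R x' t" c] by (simp add: B_def)
  qed
  moreover have "0 \<le> B"
    using alpha t0 by (simp add: B_def)
  ultimately have "B-lipschitz_on {t0..T} x'"
    using x''_int N by (intro has_integral_bounded_imp_lipschitz_on[where N="N \<union> {t0}"]) auto
  then show ?thesis ..
qed

lemma lipschitz_f_x:
  assumes "i < m"
  shows "\<exists>L. L-lipschitz_on {t0..T} (\<lambda>t. f i (x t))"
proof (rule continuous_derivative_imp_lipschitz_on)
  show "((\<lambda>t. f i (x t)) has_vector_derivative inner (grad (f i) (x t)) (x' t)) (at t within {t0..T})"
    if "t \<in> {t0..T}" for t
    unfolding has_real_derivative_iff_has_vector_derivative[symmetric] using that
    by (intro f_x_has_derivative[OF assms] x_has_vector_derivative_within) auto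
  show "continuous_on {t0..T} (\<lambda>t. inner (grad (f i) (x t)) (x' t))"
    by (intro continuous_intros continuous_on_subset[OF continuous_on_grad_x[OF assms]]
        continuous_on_subset[OF x'_cont]) auto
qed

lemma objective_nonincreasing:
  assumes "i < m" "t0 \<le> T"
  shows "f i (x T) \<le> f i (x t0)"
proof -
  \<comment> \<open>The derivative of \<open>2 f\<^sub>i(x) + |x'|\<^sup>2\<close> is
    \<open>-2\<alpha>/t |x'|\<^sup>2 + 2 (\<langle>\<nabla>f\<^sub>i(x), x'\<rangle> - max c\<in>C(x). \<langle>c, x'\<rangle>) \<le> 0\<close>.\<close>
  define F where "F = (\<lambda>t. 2 * f i (x t) + (norm (x' t))\<^sup>2)"
  obtain Lf where "Lf-lipschitz_on {t0..T} (\<lambda>t. f i (x t))"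
    using lipschitz_f_x[OF assms(1)] ..
  then have "\<exists>L. L-lipschitz_on {t0..T} (\<lambda>t. 2 * f i (x t))"
    using lipschitz_on_cmult_real by blast
  moreover have "\<exists>L. L-lipschitz_on {t0..T} (\<lambda>t. (norm (x' t))\<^sup>2)"
    using lipschitz_x'[OF assms(2)] by (auto intro: lipschitz_on_compact_norm_sq)
  ultimately have "\<exists>L. L-lipschitz_on {t0..T} F"
    unfolding F_def by (rule ex_lipschitz_on_add)
  then obtain L where "L-lipschitz_on {t0..T} F" ..
  then have "F T \<le> F t0"
  proof (rule lipschitz_nonincreasing_if_touched_above[OF assms(2) _ N])
    fix s assume s: "s \<in> {t0<..<T} - N"
    then obtain c where c: "x'' s = - (\<alpha> / s) *\<^sub>R x' s - c"
      "\<And>c'. c' \<in> Cset m f (x s) \<Longrightarrow> inner (x' s) c' \<le> inner (x' s) c"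
      using selection[of s] by auto
    have "(F has_real_derivative 2 * inner (grad (f i) (x s)) (x' s) + 2 * inner (x' s) (x'' s)) (at s)"
      unfolding F_def using s
      by (intro DERIV_add DERIV_cmult f_x_has_derivative[OF assms(1)] has_real_derivative_norm_sq
          x_has_vector_derivative_at x''_deriv) auto
    moreover have "inner (grad (f i) (x s)) (x' s) \<le> inner (x' s) c"
      using c(2)[OF grad_in_Cset[OF assms(1)]] by (simp add: inner_commute)
    moreover have "0 \<le> \<alpha> / s * inner (x' s) (x' s)"
      using s t0 alpha by simp
    ultimately have "(F has_real_derivative 2 * inner (grad (f i) (x s)) (x' s) + 2 * inner (x' s) (x'' s)) (at s)
        \<and> 2 * inner (grad (f i) (x s)) (x' s) + 2 * inner (x' s) (x'' s) \<le> 0"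
      by (simp add: c(1) inner_diff_right)
    then show "\<exists>E d. (E has_real_derivative d) (at s) \<and> d \<le> 0 \<and> E s = F s \<and> (\<forall>t\<in>{t0..T}. F t \<le> E t)"
      by blast
  qed
  then have "2 * f i (x T) + (norm (x' T))\<^sup>2 \<le> 2 * f i (x t0)"
    by (simp add: F_def x'_init)
  then show ?thesis
    using zero_le_power2[of "norm (x' T)"] by linarith
qed

definition potential :: "'a \<Rightarrow> nat \<Rightarrow> real \<Rightarrow> real" where
  "potential z i = (\<lambda>t. 2 * t\<^sup>2 * (f i (x t) - f i z)
     + 2 * (\<alpha> - 3) * ((norm (x t - z))\<^sup>2 + integral {t0..t} (\<lambda>s. s * (norm (x' s))\<^sup>2)))"

definition lyapunov :: "'a \<Rightarrow> nat \<Rightarrow> real \<Rightarrow> real" where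
  "lyapunov z i = (\<lambda>t. potential z i t + (norm (2 *\<^sub>R (x t - z) + t *\<^sub>R x' t))\<^sup>2)"

lemma potential_has_derivative:
  assumes "i < m" "t \<in> {t0..T}"
  shows "(potential z i has_real_derivative
      4 * t * (f i (x t) - f i z) + 2 * t\<^sup>2 * inner (grad (f i) (x t)) (x' t)
      + 2 * (\<alpha> - 3) * (2 * inner (x t - z) (x' t) + t * (norm (x' t))\<^sup>2)) (at t within {t0..T})"
proof -
  define F where "F = (\<lambda>t. f i (x t))"
  define D where "D = (\<lambda>t. (norm (x t - z))\<^sup>2)"
  define J where "J = (\<lambda>t. integral {t0..t} (\<lambda>s. s * (norm (x' s))\<^sup>2))"
  have x': "(x has_vector_derivative x' t) (at t within {t0..T})"
    using assms(2) by (intro x_has_vector_derivative_within) auto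
  have "(F has_real_derivative inner (grad (f i) (x t)) (x' t)) (at t within {t0..T})"
    unfolding F_def using assms(1) x' by (rule f_x_has_derivative)
  moreover have "(D has_real_derivative 2 * inner (x t - z) (x' t)) (at t within {t0..T})"
    unfolding D_def using x' by (intro has_real_derivative_norm_sq) (auto intro!: derivative_eq_intros)
  moreover have "(J has_real_derivative t * (norm (x' t))\<^sup>2) (at t within {t0..T})"
    unfolding J_def using assms(2)
    by (intro integral_has_real_derivative continuous_on_subset[OF continuous_on_kinetic]) auto
  moreover have "potential z i = (\<lambda>t. 2 * t\<^sup>2 * (F t - f i z) + 2 * (\<alpha> - 3) * (D t + J t))"
    by (simp add: potential_def F_def D_def J_def)
  ultimately show ?thesis
    by (auto intro!: derivative_eq_intros simp: F_def)
qed

lemma lipschitz_potential: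
  assumes "i < m"
  shows "\<exists>L. L-lipschitz_on {t0..T} (potential z i)"
proof (rule continuous_derivative_imp_lipschitz_on)
  show "(potential z i has_vector_derivative
      4 * t * (f i (x t) - f i z) + 2 * t\<^sup>2 * inner (grad (f i) (x t)) (x' t)
      + 2 * (\<alpha> - 3) * (2 * inner (x t - z) (x' t) + t * (norm (x' t))\<^sup>2)) (at t within {t0..T})"
    if "t \<in> {t0..T}" for t
    using potential_has_derivative[OF assms that]
    by (simp add: has_real_derivative_iff_has_vector_derivative)
  show "continuous_on {t0..T} (\<lambda>t. 4 * t * (f i (x t) - f i z) + 2 * t\<^sup>2 * inner (grad (f i) (x t)) (x' t)
      + 2 * (\<alpha> - 3) * (2 * inner (x t - z) (x' t) + t * (norm (x' t))\<^sup>2))"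
    using assms by (intro continuous_intros continuous_on_subset[OF continuous_on_f_x]
        continuous_on_subset[OF continuous_on_grad_x] continuous_on_subset[OF continuous_on_x]
        continuous_on_subset[OF x'_cont]) auto
qed

lemma lyapunov_has_derivative:
  assumes s: "t0 < s" "s \<notin> N" and "i < m" and c: "x'' s = - (\<alpha> / s) *\<^sub>R x' s - c"
  shows "(lyapunov z i has_real_derivative
      4 * s * (f i (x s) - f i z - inner c (x s - z))
      + 2 * s\<^sup>2 * (inner (grad (f i) (x s)) (x' s) - inner c (x' s))) (at s)"
proof -
  define u where "u = x s - z"
  define v where "v = x' s"
  define W where "W = (\<lambda>t. (norm (2 *\<^sub>R (x t - z) + t *\<^sub>R x' t))\<^sup>2)"
  have "(potential z i has_real_derivative 4 * s * (f i (x s) - f i z)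
      + 2 * s\<^sup>2 * inner (grad (f i) (x s)) v + 2 * (\<alpha> - 3) * (2 * inner u v + s * (norm v)\<^sup>2)) (at s)"
    using potential_has_derivative[OF \<open>i < m\<close>, of s "s + 1"] s at_within_interior[of s "{t0..s + 1}"]
    by (simp add: u_def v_def)
  moreover have "(W has_real_derivative 2 * inner (2 *\<^sub>R u + s *\<^sub>R v) ((3 - \<alpha>) *\<^sub>R v - s *\<^sub>R c)) (at s)"
  proof -
    have "((\<lambda>t. 2 *\<^sub>R (x t - z) + t *\<^sub>R x' t) has_vector_derivative 2 *\<^sub>R v + (v + s *\<^sub>R x'' s)) (at s)"
      unfolding v_def using s
      by (auto intro!: derivative_eq_intros x_has_vector_derivative_at x''_deriv)
    moreover have "2 *\<^sub>R v + (v + s *\<^sub>R x'' s) = (3 - \<alpha>) *\<^sub>R v - s *\<^sub>R c"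
    proof -
      have "x' s + 2 *\<^sub>R x' s = 3 *\<^sub>R x' s"
        using scaleR_left_distrib[of 1 2 "x' s"] by simp
      then show ?thesis
        using s t0 by (simp add: c v_def algebra_simps)
    qed
    ultimately show ?thesis
      unfolding W_def u_def v_def using has_real_derivative_norm_sq by fastforce
  qed
  moreover have "lyapunov z i = (\<lambda>t. potential z i t + W t)"
    by (simp add: lyapunov_def W_def)
  \<comment> \<open>The terms carrying \<open>\<alpha> - 3\<close> cancel.\<close>
  moreover have "4 * s * (f i (x s) - f i z) + 2 * s\<^sup>2 * inner (grad (f i) (x s)) v
      + 2 * (\<alpha> - 3) * (2 * inner u v + s * (norm v)\<^sup>2)
      + 2 * inner (2 *\<^sub>R u + s *\<^sub>R v) ((3 - \<alpha>) *\<^sub>R v - s *\<^sub>R c)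
    = 4 * s * (f i (x s) - f i z - inner c u) + 2 * s\<^sup>2 * (inner (grad (f i) (x s)) v - inner c v)"
    unfolding power2_norm_eq_inner
    by (simp add: inner_commute algebra_simps power2_eq_square)
  ultimately show ?thesis
    using DERIV_add by (fastforce simp: u_def v_def)
qed

lemma lyapunov_derivative_nonpos_at_active:
  assumes "0 \<le> s" "i < m" "c \<in> Cset m f (x s)"
    and max: "\<And>c'. c' \<in> Cset m f (x s) \<Longrightarrow> inner (x' s) c' \<le> inner (x' s) c"
    and active: "\<And>j. j < m \<Longrightarrow> f i (x s) - f i z \<le> f j (x s) - f j z"
  shows "4 * s * (f i (x s) - f i z - inner c (x s - z))
      + 2 * s\<^sup>2 * (inner (grad (f i) (x s)) (x' s) - inner c (x' s)) \<le> 0"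
proof -
  have "f i (x s) - f i z \<le> inner c (x s - z)"
  proof (rule Cset_inner_ge[OF assms(3)])
    fix j assume "j < m"
    then have "f j (x s) - f j z \<le> inner (grad (f j) (x s)) (x s - z)"
      using gradient_inequality[of j "x s" z] by (simp add: inner_diff_right)
    then show "f i (x s) - f i z \<le> inner (grad (f j) (x s)) (x s - z)"
      using active[OF \<open>j < m\<close>] by linarith
  qed
  moreover have "inner (grad (f i) (x s)) (x' s) \<le> inner c (x' s)"
    using max[OF grad_in_Cset[OF assms(2)]] by (simp add: inner_commute)
  ultimately show ?thesis
    using assms(1) by (intro add_nonpos_nonpos mult_nonneg_nonpos) auto
qed

lemma lyapunov_le_lyapunov_iff:
  assumes "s \<noteq> 0"
  shows "lyapunov z i s \<le> lyapunov z j s \<longleftrightarrow> f i (x s) - f i z \<le> f j (x s) - f j z"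
  using assms by (simp add: lyapunov_def potential_def)

lemma lipschitz_lyapunov:
  assumes "i < m" "t0 \<le> T"
  shows "\<exists>L. L-lipschitz_on {t0..T} (lyapunov z i)"
proof -
  obtain Lx where Lx: "Lx-lipschitz_on {t0..T} x"
    using lipschitz_x ..
  obtain Lv where Lv: "Lv-lipschitz_on {t0..T} x'"
    using lipschitz_x'[OF assms(2)] ..
  have "(\<bar>2\<bar> * (Lx + 0))-lipschitz_on {t0..T} (\<lambda>t. 2 *\<^sub>R (x t - z))"
    by (intro lipschitz_on_cmult lipschitz_on_diff Lx lipschitz_on_constant)
  moreover have "\<exists>L. L-lipschitz_on {t0..T} (\<lambda>t. t *\<^sub>R x' t)"
    by (rule bounded_bilinear.lipschitz_on_compact[OF bounded_bilinear_scaleR compact_Icc lipschitz_on_id Lv])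
  ultimately have "\<exists>L. L-lipschitz_on {t0..T} (\<lambda>t. 2 *\<^sub>R (x t - z) + t *\<^sub>R x' t)"
    by (intro ex_lipschitz_on_add) auto
  then obtain Lw where "Lw-lipschitz_on {t0..T} (\<lambda>t. 2 *\<^sub>R (x t - z) + t *\<^sub>R x' t)" ..
  then have "\<exists>L. L-lipschitz_on {t0..T} (\<lambda>t. (norm (2 *\<^sub>R (x t - z) + t *\<^sub>R x' t))\<^sup>2)"
    by (rule lipschitz_on_compact_norm_sq[OF compact_Icc])
  from ex_lipschitz_on_add[OF lipschitz_potential[OF assms(1)] this]
  show ?thesis
    unfolding lyapunov_def .
qed

lemma min_lyapunov_nonincreasing:
  assumes "t0 \<le> T"
  shows "Min ((\<lambda>i. lyapunov z i T) ` {..<m}) \<le> Min ((\<lambda>i. lyapunov z i t0) ` {..<m})"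
proof -
  define D where "D t = Min ((\<lambda>i. lyapunov z i t) ` {..<m})" for t
  have D_le: "D t \<le> lyapunov z j t" if "j < m" for j t
    unfolding D_def using that by (intro Min_le) auto
  have "\<exists>L. L-lipschitz_on {t0..T} D"
    unfolding D_def using m_pos lipschitz_lyapunov[OF _ assms] by (intro lipschitz_on_Min) auto
  then obtain L where "L-lipschitz_on {t0..T} D" ..
  then have "D T \<le> D t0"
  proof (rule lipschitz_nonincreasing_if_touched_above[OF assms _ N])
    fix s assume s: "s \<in> {t0<..<T} - N"
    have "D s \<in> (\<lambda>i. lyapunov z i s) ` {..<m}"
      unfolding D_def using m_pos by (intro Min_in) auto
    then obtain i where i: "i < m" "lyapunov z i s = D s"
      by auto
    have active: "f i (x s) - f i z \<le> f j (x s) - f j z" if "j < m" for j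
      using D_le[OF that, of s] i lyapunov_le_lyapunov_iff[of s z i j] s t0 by simp
    obtain c where c: "c \<in> Cset m f (x s)" "x'' s = - (\<alpha> / s) *\<^sub>R x' s - c"
      "\<And>c'. c' \<in> Cset m f (x s) \<Longrightarrow> inner (x' s) c' \<le> inner (x' s) c"
      using selection[of s] s by auto
    define d where "d = 4 * s * (f i (x s) - f i z - inner c (x s - z))
      + 2 * s\<^sup>2 * (inner (grad (f i) (x s)) (x' s) - inner c (x' s))"
    have "(lyapunov z i has_real_derivative d) (at s)"
      unfolding d_def using s i(1) c(2) by (intro lyapunov_has_derivative) auto
    moreover have "0 \<le> s"
      using s t0 by simp
    then have "d \<le> 0"
      unfolding d_def using i(1) c(1) c(3) active by (rule lyapunov_derivative_nonpos_at_active)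
    ultimately show "\<exists>E d. (E has_real_derivative d) (at s) \<and> d \<le> 0 \<and> E s = D s \<and> (\<forall>t\<in>{t0..T}. D t \<le> E t)"
      using i D_le by blast
  qed
  then show ?thesis
    unfolding D_def .
qed

lemma kinetic_integral_bound:
  assumes "t0 \<le> T" and below: "\<And>i. i < m \<Longrightarrow> f i z \<le> f i (x T)"
  shows "(\<alpha> - 3) * integral {t0..T} (\<lambda>s. s * (norm (x' s))\<^sup>2)
    \<le> t0\<^sup>2 * norm (grad (f 0) (x t0)) * norm (x t0 - z) + (\<alpha> - 1) * (norm (x t0 - z))\<^sup>2"
proof -
  have "Min ((\<lambda>i. lyapunov z i T) ` {..<m}) \<in> (\<lambda>i. lyapunov z i T) ` {..<m}"
    using m_pos by (intro Min_in) auto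
  then obtain i where i: "i < m" "lyapunov z i T = Min ((\<lambda>i. lyapunov z i T) ` {..<m})"
    by auto
  have "lyapunov z i T = 2 * T\<^sup>2 * (f i (x T) - f i z) + 2 * ((\<alpha> - 3) * (norm (x T - z))\<^sup>2)
      + 2 * (\<alpha> - 3) * integral {t0..T} (\<lambda>s. s * (norm (x' s))\<^sup>2) + (norm (2 *\<^sub>R (x T - z) + T *\<^sub>R x' T))\<^sup>2"
    by (simp add: lyapunov_def potential_def algebra_simps)
  moreover have "0 \<le> 2 * T\<^sup>2 * (f i (x T) - f i z)" "0 \<le> (\<alpha> - 3) * (norm (x T - z))\<^sup>2"
    using below[OF i(1)] alpha by simp_all
  ultimately have "2 * (\<alpha> - 3) * integral {t0..T} (\<lambda>s. s * (norm (x' s))\<^sup>2) \<le> lyapunov z i T"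
    using zero_le_power2[of "norm (2 *\<^sub>R (x T - z) + T *\<^sub>R x' T)"] by linarith
  also have "\<dots> \<le> Min ((\<lambda>i. lyapunov z i t0) ` {..<m})"
    using i(2) min_lyapunov_nonincreasing[OF assms(1)] by simp
  also have "\<dots> \<le> lyapunov z 0 t0"
    using m_pos by (intro Min_le) auto
  also have "\<dots> = 2 * t0\<^sup>2 * (f 0 (x t0) - f 0 z) + 2 * (\<alpha> - 1) * (norm (x t0 - z))\<^sup>2"
  proof -
    have "(norm (2 *\<^sub>R (x t0 - z)))\<^sup>2 = 4 * (norm (x t0 - z))\<^sup>2"
      by (simp add: power_mult_distrib)
    then show ?thesis
      by (simp add: lyapunov_def potential_def x'_init algebra_simps)
  qed
  also have "\<dots> \<le> 2 * t0\<^sup>2 * (norm (grad (f 0) (x t0)) * norm (x t0 - z)) + 2 * (\<alpha> - 1) * (norm (x t0 - z))\<^sup>2"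
  proof -
    have "f 0 (x t0) - f 0 z \<le> inner (grad (f 0) (x t0)) (x t0 - z)"
      using gradient_inequality[OF m_pos, of "x t0" z] by (simp add: inner_diff_right)
    also have "\<dots> \<le> norm (grad (f 0) (x t0)) * norm (x t0 - z)"
      by (rule norm_cauchy_schwarz)
    finally show ?thesis
      by (simp add: mult_left_mono)
  qed
  finally show ?thesis
    by (simp add: algebra_simps)
qed

lemma kinetic_energy_integral_finite:
  assumes dominating: "\<And>y. \<forall>i<m. f i y \<le> f i (x t0) \<Longrightarrow> \<exists>z. (\<forall>i<m. f i z \<le> f i y) \<and> norm (z - x t0) \<le> \<rho>"
  shows "(\<integral>\<^sup>+ s \<in> {t0..}. ennreal (s * (norm (x' s))\<^sup>2) \<partial>lborel) < \<infinity>"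
proof -
  define K where "K = (t0\<^sup>2 * norm (grad (f 0) (x t0)) * \<rho> + (\<alpha> - 1) * \<rho>\<^sup>2) / (\<alpha> - 3)"
  have "integral {t0..T} (\<lambda>s. s * (norm (x' s))\<^sup>2) \<le> K" if T: "t0 \<le> T" for T
  proof -
    obtain z where z: "\<forall>i<m. f i z \<le> f i (x T)" "norm (z - x t0) \<le> \<rho>"
      using dominating[of "x T"] objective_nonincreasing[OF _ T] by auto
    then have "(\<alpha> - 3) * integral {t0..T} (\<lambda>s. s * (norm (x' s))\<^sup>2)
        \<le> t0\<^sup>2 * norm (grad (f 0) (x t0)) * norm (x t0 - z) + (\<alpha> - 1) * (norm (x t0 - z))\<^sup>2"
      using kinetic_integral_bound[OF T] by auto
    also have "\<dots> \<le> t0\<^sup>2 * norm (grad (f 0) (x t0)) * \<rho> + (\<alpha> - 1) * \<rho>\<^sup>2"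
      using z(2) alpha by (intro add_mono mult_left_mono power_mono) (auto simp: norm_minus_commute)
    finally show ?thesis
      using alpha by (simp add: K_def field_simps)
  qed
  moreover have "0 \<le> s * (norm (x' s))\<^sup>2" if "t0 \<le> s" for s
    using t0 that by simp
  ultimately have "(\<integral>\<^sup>+ s \<in> {t0..}. ennreal (s * (norm (x' s))\<^sup>2) \<partial>lborel) \<le> ennreal K"
    using nn_integral_atLeast_le[OF continuous_on_kinetic] by blast
  then show ?thesis
    using ennreal_less_top[of K] by (simp add: infinity_ennreal_def le_less_trans)
qed

end

theorem corollary4p15:
  fixes f :: "nat \<Rightarrow> 'a::{real_inner, complete_space} \<Rightarrow> real"
    and m :: nat and \<alpha> t0 :: real and x0 :: 'a
    and x x' x'' :: "real \<Rightarrow> 'a"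
  assumes m_pos: "0 < m"
    and convex: "\<forall>i<m. convex_on UNIV (f i)"
    and diff: "\<forall>i<m. \<forall>y. \<exists>v. has_gradient (f i) v y"
    and grad_cont: "\<forall>i<m. continuous_on UNIV (grad (f i))"
    and alpha: "\<alpha> > 3"
    and t0: "t0 > 0"
    \<comment> \<open>x is C^1 on [t0,+inf) with derivative x'\<close>
    and x_deriv: "\<forall>t\<ge>t0. (x has_vector_derivative x' t) (at t within {t0..})"
    and x'_cont: "continuous_on {t0..} x'"
    \<comment> \<open>x' is absolutely continuous on every [t0,T]\<close>
    and x'_ac: "\<forall>T\<ge>t0. absolutely_continuous_on {t0..T} x'"
    \<comment> \<open>x'' measurable, x' is the integral of x'', and x'' is the a.e. derivative of x'\<close>
    and x''_meas: "x'' \<in> borel_measurable (lebesgue_on {t0..})"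
    and x''_int: "\<forall>t\<ge>t0. (x'' has_integral (x' t - x' t0)) {t0..t}"
    and x''_deriv: "AE t in lebesgue. t > t0 \<longrightarrow> (x' has_vector_derivative x'' t) (at t)"
    \<comment> \<open>the equation, for almost all t > t0\<close>
    and eqn: "AE t in lebesgue. t > t0 \<longrightarrow>
                (\<alpha> / t) *\<^sub>R x' t + proj ((\<lambda>v. v + x'' t) ` Cset m f (x t)) 0 = 0"
    and init: "x t0 = x0" "x' t0 = 0"
    \<comment> \<open>Assumption on the weak Pareto set\<close>
    and pareto_exists: "\<forall>y0 y. y \<in> sublevel m f (Fvec m f y0) \<longrightarrow>
                          (\<exists>xs. xs \<in> weak_pareto_level m f (Fvec m f y))"
    and R_finite: "(SUP Fs \<in> Fvec m f ` weak_pareto_level m f (Fvec m f x0).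
                      INF z \<in> {z. Fvec m f z = Fs}. ereal ((norm (z - x0))\<^sup>2 / 2)) < \<infinity>"
  shows "(\<integral>\<^sup>+ s \<in> {t0..}. ennreal (s * (norm (x' s))\<^sup>2) \<partial>lborel) < \<infinity>"
proof -
  have "AE t in lebesgue. t0 < t \<longrightarrow> (x' has_vector_derivative x'' t) (at t) \<and>
      (\<alpha> / t) *\<^sub>R x' t + proj ((\<lambda>v. v + x'' t) ` Cset m f (x t)) 0 = 0"
    using x''_deriv eqn by eventually_elim auto
  then obtain N where "negligible N" and N: "\<And>t. t \<notin> N \<Longrightarrow> t0 < t \<longrightarrow>
      (x' has_vector_derivative x'' t) (at t) \<and> (\<alpha> / t) *\<^sub>R x' t + proj ((\<lambda>v. v + x'' t) ` Cset m f (x t)) 0 = 0"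
    by (rule AE_lebesgue_obtain_negligible) blast
  interpret flow: inertial_pareto_flow f m \<alpha> t0 x x' x'' N
  proof
    show "has_gradient (f i) (grad (f i) y) y" if "i < m" for i y
      using diff that has_gradient_imp_grad_eq by metis
  qed (use m_pos convex grad_cont alpha t0 x_deriv x'_cont init(2) x''_int \<open>negligible N\<close> N in auto)
  obtain \<rho> where "\<And>y. \<forall>i<m. f i y \<le> f i (x t0) \<Longrightarrow> \<exists>z. (\<forall>i<m. f i z \<le> f i y) \<and> norm (z - x t0) \<le> \<rho>"
    using weak_pareto_dominating_point_bounded[OF pareto_exists R_finite] unfolding init(1) by blast
  then show ?thesis
    by (rule flow.kinetic_energy_integral_finite)
qed

end
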